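(* Let $X$ and $Y$ be uncertain variables on a common set $\Omega$ with finite ranges $[\![X]\!]$ and $[\![Y]\!]$. Then $$\mathcal{L}_\star(X\rightarrow Y)\leq \sup_{P}\ \widetilde{\mathcal{L}}_P(X\rightarrow Y)+H_0(X\mid Y),$$ where the supremum is over all conditional probability mass functions $P=(P(y\mid x))_{x\in[\![X]\!],\,y\in[\![Y]\!]}$ (i.e., $P(y\mid x)\ge 0$ and $\sum_{y\in[\![Y]\!]}P(y\mid x)=1$ for each $x$), and $\widetilde{\mathcal{L}}_P(X\rightarrow Y):=\log_2\Big(\sum_{y\in[\![Y]\!]}\max_{x\in[\![X]\!]}P(y\mid x)\Big)$ is the maximal stochastic leakage of the channel $P$.
   Context: Let $\Omega$ be a set. An uncertain variable (uv) is a map $X:\Omega\to\mathbb{X}$ into some set; all uvs considered have finite ranges. The range of $X$ is $[\![X]\!]:=\{X(\omega):\omega\in\Omega\}$; the conditional range is $[\![X\mid Y(\omega)=y]\!]:=\{X(\omega):\omega\in\Omega,\ Y(\omega)=y\}$. Conditional non-stochastic entropy: $H_0(X\mid Y):=\max_{y\in[\![Y]\!]}\log_2|[\![X\mid Y(\omega)=y]\!]|$. The non-stochastic brute-force guessing leakage from a uv $U$ to a uv $Y$ is $$\mathcal{L}(U\rightarrow Y):=\log_2\left(\frac{|[\![U]\!]|}{\min_{y\in[\![Y]\!]}|[\![U\mid Y(\omega)=y]\!]|}\right).$$ The maximal non-stochastic brute-force leakage from $X$ to $Y$ is $$\mathcal{L}_\star(X\rightarrow Y):=\sup_{g}\ \mathcal{L}(g\circ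 X\rightarrow Y),$$ where the supremum ranges over all finite sets $\mathcal{U}$ and all functions $g:[\![X]\!]\to\mathcal{U}$. *)

theory Defs
  imports Complex_Main
begin

text \<open>Omega is modelled as the universe of a type 'o; uncertain variables are maps
  X :: 'o => 'x.  The range [[X]] is the library's range X = X ` UNIV.\<close>

definition cond_range :: "('o \<Rightarrow> 'a) \<Rightarrow> ('o \<Rightarrow> 'b) \<Rightarrow> 'b \<Rightarrow> 'a set" where
  "cond_range X Y y = {X w | w. Y w = y}"

definition H0_cond :: "('o \<Rightarrow> 'a) \<Rightarrow> ('o \<Rightarrow> 'b) \<Rightarrow> real" where
  "H0_cond X Y = Max ((\<lambda>y. log 2 (real (card (cond_range X Y y)))) ` range Y)"

definition nsbf_leakage :: "('o \<Rightarrow> 'u) \<Rightarrow> ('o \<Rightarrow> 'b) \<Rightarrow> real" where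
  "nsbf_leakage U Y =
     log 2 (real (card (range U)) / real (Min ((\<lambda>y. card (cond_range U Y y)) ` range Y)))"

text \<open>Since the leakage is invariant under injective relabelling of the codomain and any
  finite set injects into nat, the codomain is taken to be nat.\<close>

definition max_nsbf_leakage :: "('o \<Rightarrow> 'a) \<Rightarrow> ('o \<Rightarrow> 'b) \<Rightarrow> real" where
  "max_nsbf_leakage X Y = (SUP g :: 'a \<Rightarrow> nat. nsbf_leakage (g \<circ> X) Y)"

text \<open>Conditional pmfs P(y|x) = P x y on [[X]] x [[Y]].\<close>

definition channels :: "('o \<Rightarrow> 'a) \<Rightarrow> ('o \<Rightarrow> 'b) \<Rightarrow> ('a \<Rightarrow> 'b \<Rightarrow> real) set" where
  "channels X Y = {P. \<forall>x\<in>range X. (\<forall>y\<in>range Y. P x y \<ge> 0) \<and> (\<Sum>y\<in>range Y. P x y) = 1}"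

definition max_stoch_leakage ::
  "('o \<Rightarrow> 'a) \<Rightarrow> ('o \<Rightarrow> 'b) \<Rightarrow> ('a \<Rightarrow> 'b \<Rightarrow> real) \<Rightarrow> real" where
  "max_stoch_leakage X Y P = log 2 (\<Sum>y\<in>range Y. Max ((\<lambda>x. P x y) ` range X))"

end

theory Submission
  imports Defs
begin

text \<open>Relabelling X by g can only shrink its range, and every conditional range is nonempty,
  so each leakage is at most log |[[X]]|. To compare with the stochastic side, send every
  x to the Y-value h x of one of its preimages: the deterministic channel y = h x has
  stochastic leakage log |h[[[X]]]|, and each fibre of h lies in a conditional range of X,
  so it has at most 2^H0(X|Y) elements. Hence |[[X]]| \<le> |h[[[X]]]| 2^H0(X|Y).\<close>

lemma cond_range_subset_range: "cond_range X Y y \<subseteq> range X"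
  unfolding cond_range_def by auto

lemma card_cond_range_pos:
  assumes "finite (range X)" and "y \<in> range Y"
  shows "0 < card (cond_range X Y y)"
proof -
  have "cond_range X Y y \<noteq> {}"
    using assms(2) unfolding cond_range_def by auto
  then show ?thesis
    using finite_subset[OF cond_range_subset_range assms(1)] by (simp add: card_gt_0_iff)
qed

lemma nsbf_leakage_le_log_card_range:
  assumes fin_U: "finite (range U)" and fin_Y: "finite (range Y)"
  shows "nsbf_leakage U Y \<le> log 2 (real (card (range U)))"
proof -
  define m where "m = Min ((\<lambda>y. card (cond_range U Y y)) ` range Y)"
  have "m \<in> (\<lambda>y. card (cond_range U Y y)) ` range Y"
    unfolding m_def using fin_Y by (intro Min_in) auto
  then have "1 \<le> m"
    using card_cond_range_pos[OF fin_U, of _ Y] by (auto simp: Suc_le_eq)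
  moreover have "0 < card (range U)"
    using fin_U by (simp add: card_gt_0_iff)
  ultimately have "0 < real (card (range U)) / real m"
    and "real (card (range U)) / real m \<le> real (card (range U))"
    by (simp_all add: divide_le_eq)
  then show ?thesis
    unfolding nsbf_leakage_def m_def[symmetric] by simp
qed

lemma max_stoch_leakage_le_log_card_range:
  assumes fin_X: "finite (range X)" and fin_Y: "finite (range Y)" and P: "P \<in> channels X Y"
  shows "max_stoch_leakage X Y P \<le> log 2 (real (card (range Y)))"
proof -
  let ?M = "\<lambda>y. Max ((\<lambda>x. P x y) ` range X)"
  have prob: "\<forall>y\<in>range Y. P x y \<ge> 0" "(\<Sum>y\<in>range Y. P x y) = 1" if "x \<in> range X" for x
    using P that unfolding channels_def by auto
  have "P x y \<le> 1" if "x \<in> range X" "y \<in> range Y" for x y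
    using member_le_sum[of y "range Y" "P x"] prob[OF that(1)] that(2) fin_Y by auto
  then have M_le_1: "?M y \<le> 1" if "y \<in> range Y" for y
    using fin_X that by (auto simp: Max_le_iff)
  have "1 = (\<Sum>y\<in>range Y. P (X undefined) y)"
    using prob by simp
  also have "\<dots> \<le> (\<Sum>y\<in>range Y. ?M y)"
    using fin_X by (intro sum_mono Max_ge) auto
  finally have "0 < (\<Sum>y\<in>range Y. ?M y)"
    by simp
  moreover have "(\<Sum>y\<in>range Y. ?M y) \<le> real (card (range Y))"
    using sum_mono[of "range Y" ?M "\<lambda>_. 1"] M_le_1 by simp
  ultimately show ?thesis
    unfolding max_stoch_leakage_def by simp
qed

definition deterministic_channel :: "('a \<Rightarrow> 'b) \<Rightarrow> 'a \<Rightarrow> 'b \<Rightarrow> real" where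
  "deterministic_channel h x y = (if y = h x then 1 else 0)"

lemma deterministic_channel_in_channels:
  assumes "finite (range Y)" and "h ` range X \<subseteq> range Y"
  shows "deterministic_channel h \<in> channels X Y"
  using assms unfolding channels_def deterministic_channel_def by (auto simp: sum.delta)

lemma max_stoch_leakage_deterministic_channel:
  assumes fin_X: "finite (range X)" and fin_Y: "finite (range Y)"
    and h: "h ` range X \<subseteq> range Y"
  shows "max_stoch_leakage X Y (deterministic_channel h) = log 2 (real (card (h ` range X)))"
proof -
  have "Max ((\<lambda>x. deterministic_channel h x y) ` range X) = (if y \<in> h ` range X then 1 else 0)"
    for y
  proof (intro Max_eqI)
    show "finite ((\<lambda>x. deterministic_channel h x y) ` range X)"
      using fin_X by simp
    show "a \<le> (if y \<in> h ` range X then 1 else 0)"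
      if "a \<in> (\<lambda>x. deterministic_channel h x y) ` range X" for a
      using that by (auto simp: deterministic_channel_def)
    show "(if y \<in> h ` range X then 1 else 0) \<in> (\<lambda>x. deterministic_channel h x y) ` range X"
      by (cases "y \<in> h ` range X")
        (auto simp: deterministic_channel_def image_iff intro: exI[of _ "X undefined"])
  qed
  then have "(\<Sum>y\<in>range Y. Max ((\<lambda>x. deterministic_channel h x y) ` range X))
      = real (card (range Y \<inter> h ` range X))"
    using fin_Y by (simp add: sum.If_cases)
  also have "range Y \<inter> h ` range X = h ` range X"
    using h by blast
  finally show ?thesis
    unfolding max_stoch_leakage_def by simp
qed

lemma card_le_card_image_mult_fibre_bound:
  assumes "finite A" and "\<And>y. y \<in> h ` A \<Longrightarrow> real (card {x \<in> A. h x = y}) \<le> m"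
  shows "real (card A) \<le> real (card (h ` A)) * m"
proof -
  have "real (card A) = (\<Sum>y\<in>h ` A. real (card {x \<in> A. h x = y}))"
    using sum.image_gen[OF assms(1), of "\<lambda>_. 1 :: real" h] by simp
  also have "\<dots> \<le> (\<Sum>y\<in>h ` A. m)"
    using assms(2) by (rule sum_mono)
  finally show ?thesis
    by simp
qed

lemma card_cond_range_le_powr_H0_cond:
  assumes fin_X: "finite (range X)" and fin_Y: "finite (range Y)" and y: "y \<in> range Y"
  shows "real (card (cond_range X Y y)) \<le> 2 powr H0_cond X Y"
proof -
  have "log 2 (real (card (cond_range X Y y))) \<le> H0_cond X Y"
    unfolding H0_cond_def using fin_Y y by (intro Max_ge) auto
  then have "2 powr log 2 (real (card (cond_range X Y y))) \<le> 2 powr H0_cond X Y"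
    by (rule powr_mono) simp
  then show ?thesis
    using card_cond_range_pos[OF fin_X y] by simp
qed

lemma mem_cond_range_inv:
  assumes "x \<in> range X"
  shows "x \<in> cond_range X Y (Y (inv X x))"
  unfolding cond_range_def using f_inv_into_f[OF assms] by force

lemma log_card_range_le_log_card_image_plus_H0_cond:
  assumes fin_X: "finite (range X)" and fin_Y: "finite (range Y)"
  shows "log 2 (real (card (range X)))
           \<le> log 2 (real (card ((Y \<circ> inv X) ` range X))) + H0_cond X Y"
proof -
  let ?h = "Y \<circ> inv X"
  have "real (card {x \<in> range X. ?h x = y}) \<le> 2 powr H0_cond X Y" if "y \<in> ?h ` range X" for y
  proof -
    have "{x \<in> range X. ?h x = y} \<subseteq> cond_range X Y y"
      using mem_cond_range_inv by fastforce
    then have "card {x \<in> range X. ?h x = y} \<le> card (cond_range X Y y)"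
      using finite_subset[OF cond_range_subset_range fin_X] by (rule card_mono[rotated])
    then show ?thesis
      using card_cond_range_le_powr_H0_cond[OF fin_X fin_Y] that by fastforce
  qed
  then have "real (card (range X)) \<le> real (card (?h ` range X)) * 2 powr H0_cond X Y"
    by (rule card_le_card_image_mult_fibre_bound[OF fin_X])
  moreover have "0 < card (range X)" and "0 < card (?h ` range X)"
    using fin_X by (simp_all add: card_gt_0_iff)
  ultimately have "log 2 (real (card (range X)))
      \<le> log 2 (real (card (?h ` range X)) * 2 powr H0_cond X Y)"
    by simp
  then show ?thesis
    using \<open>0 < card (?h ` range X)\<close> by (simp add: log_mult)
qed

lemma nsbf_leakage_comp_le_log_card_range:
  assumes fin_X: "finite (range X)" and fin_Y: "finite (range Y)"
  shows "nsbf_leakage (g \<circ> X) Y \<le> log 2 (real (card (range X)))"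
proof -
  have range_comp: "range (g \<circ> X) = g ` range X"
    by (simp add: image_comp)
  then have fin_gX: "finite (range (g \<circ> X))"
    using fin_X by simp
  have "card (range (g \<circ> X)) \<le> card (range X)"
    unfolding range_comp using fin_X by (rule card_image_le)
  moreover have "0 < card (range (g \<circ> X))"
    using fin_gX by (simp add: card_gt_0_iff)
  ultimately have "log 2 (real (card (range (g \<circ> X)))) \<le> log 2 (real (card (range X)))"
    by (simp del: o_apply)
  with nsbf_leakage_le_log_card_range[OF fin_gX fin_Y] show ?thesis
    by linarith
qed

theorem proposition6:
  fixes X :: "'o \<Rightarrow> 'a" and Y :: "'o \<Rightarrow> 'b"
  assumes "finite (range X)" and "finite (range Y)"
  shows "max_nsbf_leakage X Y
           \<le> (SUP P\<in>channels X Y. max_stoch_leakage X Y P) + H0_cond X Y"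
proof -
  let ?h = "Y \<circ> inv X"
  have h: "?h ` range X \<subseteq> range Y"
    by auto
  have "bdd_above (max_stoch_leakage X Y ` channels X Y)"
    using max_stoch_leakage_le_log_card_range[OF assms] by (intro bdd_aboveI) blast
  then have "max_stoch_leakage X Y (deterministic_channel ?h)
      \<le> (SUP P\<in>channels X Y. max_stoch_leakage X Y P)"
    by (intro cSUP_upper deterministic_channel_in_channels[OF assms(2) h])
  then have stoch: "log 2 (real (card (?h ` range X)))
      \<le> (SUP P\<in>channels X Y. max_stoch_leakage X Y P)"
    by (simp only: max_stoch_leakage_deterministic_channel[OF assms h])
  have "nsbf_leakage (g \<circ> X) Y
      \<le> (SUP P\<in>channels X Y. max_stoch_leakage X Y P) + H0_cond X Y" for g :: "'a \<Rightarrow> nat"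
    using nsbf_leakage_comp_le_log_card_range[OF assms, of g]
      log_card_range_le_log_card_image_plus_H0_cond[OF assms] stoch
    by linarith
  then show ?thesis
    unfolding max_nsbf_leakage_def by (intro cSUP_least) auto
qed

end
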